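(* Let $(F_S,\iota)$ be an embedded local étale algebra, $\Gamma\subseteq\mathrm{PGL}_2(F_S)$ a plectic subgroup and $g\in\mathrm{PGL}_2(F_S)$. Then $g\Gamma g^{-1}$ is plectic with set of distinguished limit points $\mathcal L_{g\Gamma g^{-1},S}=g(\mathcal L_{\Gamma,S})$.
   Context: Fix a prime $p$ and let $\mathbf{C}$ be the completion of an algebraic closure of $\mathbb{Q}_p$ or of $\mathbb{F}_p((T))$. An embedded local étale algebra $(F_S,\iota)$ consists of a finite non-empty set $S$, non-Archimedean local fields $F_\mathfrak p$ ($\mathfrak p\in S$) of residue characteristic $p$ and the same characteristic as $\mathbf C$, and embeddings $\iota_\mathfrak p\colon F_\mathfrak p\hookrightarrow\mathbf C$ (so $\mathbb P^1(F_\mathfrak p)\subseteq\mathbb P^1(\mathbf C)$). $\mathrm{PGL}_2(F_S)=\prod_\mathfrak p\mathrm{PGL}_2(F_\mathfrak p)$ acts componentwise by Möbius transformations on $\prod_{\mathfrak p\in S}\mathbb P^1(\mathbf C)$. The limit set $\mathcal L^S_\Gamma$ of a subgroup $\Gamma$ is the set of $x$ with $\gamma_j(y)\to x$ for some $y$ and pairwise distinct $\gamma_j\in\Gamma$. $\Gamma$ is plectic if there are subsets $\mathcal L_{\Gamma,\mathfrak p}\subseteq\mathbb P^1(F_\mathfrak p)$ with $\mathcal L^S_\Gamma=\bigcup_\mathfrak p\big(\mathcal L_{\Gamma,\mathfrak p}\times\prod_{\mathfrak q\ne\mathfrak p}\mathbb P^1(\mathbf C)\big)$; its set of distinguished limit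 points is $\mathcal L_{\Gamma,S}=\prod_\mathfrak p\mathcal L_{\Gamma,\mathfrak p}$. *)

theory Defs
  imports Complex_Main "HOL-Computational_Algebra.Polynomial" "HOL-Library.FuncSet"
begin

text \<open>The field C is modelled by a type 'c of class field together with an
absolute value v.\<close>

definition nonarch_abs :: "('c::field \<Rightarrow> real) \<Rightarrow> bool" where
  "nonarch_abs v \<longleftrightarrow> v 0 = 0 \<and> (\<forall>x. x \<noteq> 0 \<longrightarrow> v x > 0) \<and>
     (\<forall>x y. v (x * y) = v x * v y) \<and> (\<forall>x y. v (x + y) \<le> max (v x) (v y))"

definition v_complete :: "('c::field \<Rightarrow> real) \<Rightarrow> bool" where
  "v_complete v \<longleftrightarrow> (\<forall>X::nat \<Rightarrow> 'c.
     (\<forall>e>0. \<exists>N. \<forall>m\<ge>N. \<forall>n\<ge>N. v (X m - X n) < e) \<longrightarrow>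
     (\<exists>l. (\<lambda>n. v (X n - l)) \<longlonglongrightarrow> 0))"

definition alg_closed_field :: "'c::field itself \<Rightarrow> bool" where
  "alg_closed_field _ \<longleftrightarrow> (\<forall>q::'c poly. degree q > 0 \<longrightarrow> (\<exists>x. poly q x = 0))"

definition ambient_C :: "nat \<Rightarrow> ('c::field \<Rightarrow> real) \<Rightarrow> bool" where
  "ambient_C p v \<longleftrightarrow> prime p \<and> nonarch_abs v \<and> (\<exists>x. v x \<noteq> 0 \<and> v x \<noteq> 1) \<and>
     v_complete v \<and> alg_closed_field TYPE('c) \<and> v (of_nat p) < 1"

section \<open>Non-Archimedean local fields embedded in C (given as images of the embeddings)\<close>

definition local_subfield :: "('c::field \<Rightarrow> real) \<Rightarrow> 'c set \<Rightarrow> bool" where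
  "local_subfield v K \<longleftrightarrow>
     \<comment> \<open>subfield\<close>
     0 \<in> K \<and> 1 \<in> K \<and> (\<forall>x\<in>K. \<forall>y\<in>K. x + y \<in> K \<and> x * y \<in> K) \<and>
     (\<forall>x\<in>K. - x \<in> K) \<and> (\<forall>x\<in>K. x \<noteq> 0 \<longrightarrow> inverse x \<in> K) \<and>
     \<comment> \<open>complete (closed in C)\<close>
     (\<forall>X l. (\<forall>n. X n \<in> K) \<longrightarrow> (\<lambda>n. v (X n - l)) \<longlonglongrightarrow> 0 \<longrightarrow> l \<in> K) \<and>
     \<comment> \<open>discretely valued, non-trivially\<close>
     (\<exists>\<pi>\<in>K. 0 < v \<pi> \<and> v \<pi> < 1 \<and> (\<forall>x\<in>K. x \<noteq> 0 \<longrightarrow> (\<exists>n::int. v x = v \<pi> powi n))) \<and>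
     \<comment> \<open>finite residue field\<close>
     (\<exists>R. finite R \<and> R \<subseteq> {x\<in>K. v x \<le> 1} \<and>
        (\<forall>x\<in>K. v x \<le> 1 \<longrightarrow> (\<exists>r\<in>R. v (x - r) < 1)))"

type_synonym 'c vec2 = "'c \<times> 'c"
type_synonym 'c pt = "'c vec2 set"          \<comment> \<open>a point of P^1(C): a line minus 0\<close>
type_synonym 'c m22 = "'c \<times> 'c \<times> 'c \<times> 'c"  \<comment> \<open>(a,b,c,d) = [[a,b],[c,d]]\<close>
type_synonym 'c pgl = "'c m22 set"          \<comment> \<open>an element of PGL_2(C): C^x-class of a matrix\<close>

definition proj_line :: "'c::field vec2 \<Rightarrow> 'c pt" where
  "proj_line u = {(k * fst u, k * snd u) | k. k \<noteq> 0}"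

text \<open>P^1(K) as a subset of P^1(C); P1 UNIV is P^1(C).\<close>
definition P1 :: "'c::field set \<Rightarrow> 'c pt set" where
  "P1 K = {proj_line (x, y) | x y. x \<in> K \<and> y \<in> K \<and> (x, y) \<noteq> (0, 0)}"

fun mdet :: "'c::field m22 \<Rightarrow> 'c" where
  "mdet (a, b, c, d) = a * d - b * c"

fun mmul :: "'c::field m22 \<Rightarrow> 'c m22 \<Rightarrow> 'c m22" where
  "mmul (a, b, c, d) (a', b', c', d') =
     (a * a' + b * c', a * b' + b * d', c * a' + d * c', c * b' + d * d')"

fun mapp :: "'c::field m22 \<Rightarrow> 'c vec2 \<Rightarrow> 'c vec2" where
  "mapp (a, b, c, d) (x, y) = (a * x + b * y, c * x + d * y)"

fun madj :: "'c::field m22 \<Rightarrow> 'c m22" where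
  "madj (a, b, c, d) = (d, - b, - c, a)"

fun msmult :: "'c::field \<Rightarrow> 'c m22 \<Rightarrow> 'c m22" where
  "msmult k (a, b, c, d) = (k * a, k * b, k * c, k * d)"

definition pgl_class :: "'c::field m22 \<Rightarrow> 'c pgl" where
  "pgl_class M = {msmult k M | k. k \<noteq> 0}"

fun mentries :: "'c m22 \<Rightarrow> 'c set" where
  "mentries (a, b, c, d) = {a, b, c, d}"

definition PGL2 :: "'c::field set \<Rightarrow> 'c pgl set" where
  "PGL2 K = {pgl_class M | M. mentries M \<subseteq> K \<and> mdet M \<noteq> 0}"

definition pgl_mult :: "'c::field pgl \<Rightarrow> 'c pgl \<Rightarrow> 'c pgl" where
  "pgl_mult X Y = {mmul A B | A B. A \<in> X \<and> B \<in> Y}"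

definition pgl_inv :: "'c::field pgl \<Rightarrow> 'c pgl" where
  "pgl_inv X = madj ` X"

definition pgl_one :: "'c::field pgl" where
  "pgl_one = pgl_class (1, 0, 0, 1)"

definition mob :: "'c::field pgl \<Rightarrow> 'c pt \<Rightarrow> 'c pt" where
  "mob X z = {mapp A u | A u. A \<in> X \<and> u \<in> z}"

definition chordal :: "('c::field \<Rightarrow> real) \<Rightarrow> 'c vec2 \<Rightarrow> 'c vec2 \<Rightarrow> real" where
  "chordal v u w = v (fst u * snd w - snd u * fst w) /
      (max (v (fst u)) (v (snd u)) * max (v (fst w)) (v (snd w)))"

definition pt_rep :: "'c pt \<Rightarrow> 'c vec2" where
  "pt_rep z = (SOME u. u \<in> z)"

definition p1_tendsto :: "('c::field \<Rightarrow> real) \<Rightarrow> (nat \<Rightarrow> 'c pt) \<Rightarrow> 'c pt \<Rightarrow> bool" where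
  "p1_tendsto v X x \<longleftrightarrow> (\<lambda>j. chordal v (pt_rep (X j)) (pt_rep x)) \<longlonglongrightarrow> 0"

text \<open>An embedded local etale algebra: a finite non-empty index set S and for each
p in S the image F p of the embedding of the local field F_p into C.\<close>
definition emb_local_etale :: "('c::field \<Rightarrow> real) \<Rightarrow> 'i set \<Rightarrow> ('i \<Rightarrow> 'c set) \<Rightarrow> bool" where
  "emb_local_etale v S F \<longleftrightarrow> finite S \<and> S \<noteq> {} \<and> (\<forall>q\<in>S. local_subfield v (F q))"

definition PS :: "'i set \<Rightarrow> ('i \<Rightarrow> 'c::field pt) set" where
  "PS S = PiE S (\<lambda>_. P1 UNIV)"

definition PGL2_S :: "'i set \<Rightarrow> ('i \<Rightarrow> 'c::field set) \<Rightarrow> ('i \<Rightarrow> 'c pgl) set" where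
  "PGL2_S S F = PiE S (\<lambda>q. PGL2 (F q))"

definition mult_S :: "'i set \<Rightarrow> ('i \<Rightarrow> 'c::field pgl) \<Rightarrow> ('i \<Rightarrow> 'c pgl) \<Rightarrow> ('i \<Rightarrow> 'c pgl)" where
  "mult_S S g h = restrict (\<lambda>q. pgl_mult (g q) (h q)) S"

definition inv_S :: "'i set \<Rightarrow> ('i \<Rightarrow> 'c::field pgl) \<Rightarrow> ('i \<Rightarrow> 'c pgl)" where
  "inv_S S g = restrict (\<lambda>q. pgl_inv (g q)) S"

definition one_S :: "'i set \<Rightarrow> ('i \<Rightarrow> 'c::field pgl)" where
  "one_S S = restrict (\<lambda>q. pgl_one) S"

definition act_S :: "'i set \<Rightarrow> ('i \<Rightarrow> 'c::field pgl) \<Rightarrow> ('i \<Rightarrow> 'c pt) \<Rightarrow> ('i \<Rightarrow> 'c pt)" where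
  "act_S S g x = restrict (\<lambda>q. mob (g q) (x q)) S"

definition subgroup_S :: "'i set \<Rightarrow> ('i \<Rightarrow> 'c::field set) \<Rightarrow> ('i \<Rightarrow> 'c pgl) set \<Rightarrow> bool" where
  "subgroup_S S F \<Gamma> \<longleftrightarrow> \<Gamma> \<subseteq> PGL2_S S F \<and> one_S S \<in> \<Gamma> \<and>
     (\<forall>g\<in>\<Gamma>. \<forall>h\<in>\<Gamma>. mult_S S g h \<in> \<Gamma>) \<and> (\<forall>g\<in>\<Gamma>. inv_S S g \<in> \<Gamma>)"

definition conj_S :: "'i set \<Rightarrow> ('i \<Rightarrow> 'c::field pgl) \<Rightarrow> ('i \<Rightarrow> 'c pgl) set \<Rightarrow> ('i \<Rightarrow> 'c pgl) set" where
  "conj_S S g \<Gamma> = (\<lambda>\<gamma>. mult_S S (mult_S S g \<gamma>) (inv_S S g)) ` \<Gamma>"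

text \<open>Limit set: x such that gamma_j(y) tends to x (componentwise, i.e. in the product
topology) for some y and pairwise distinct gamma_j in Gamma.\<close>
definition limit_set :: "('c::field \<Rightarrow> real) \<Rightarrow> 'i set \<Rightarrow> ('i \<Rightarrow> 'c pgl) set \<Rightarrow> ('i \<Rightarrow> 'c pt) set" where
  "limit_set v S \<Gamma> = {x \<in> PS S. \<exists>y \<in> PS S. \<exists>\<gamma>::nat \<Rightarrow> ('i \<Rightarrow> 'c pgl).
      (\<forall>j. \<gamma> j \<in> \<Gamma>) \<and> inj \<gamma> \<and> (\<forall>q\<in>S. p1_tendsto v (\<lambda>j. act_S S (\<gamma> j) y q) (x q))}"

definition plectic_family :: "('c::field \<Rightarrow> real) \<Rightarrow> 'i set \<Rightarrow> ('i \<Rightarrow> 'c set) \<Rightarrow>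
    ('i \<Rightarrow> 'c pgl) set \<Rightarrow> ('i \<Rightarrow> 'c pt set) \<Rightarrow> bool" where
  "plectic_family v S F \<Gamma> L \<longleftrightarrow> (\<forall>q\<in>S. L q \<subseteq> P1 (F q)) \<and> (\<forall>q. q \<notin> S \<longrightarrow> L q = {}) \<and>
     limit_set v S \<Gamma> = (\<Union>q\<in>S. {x \<in> PS S. x q \<in> L q})"

definition plectic :: "('c::field \<Rightarrow> real) \<Rightarrow> 'i set \<Rightarrow> ('i \<Rightarrow> 'c set) \<Rightarrow>
    ('i \<Rightarrow> 'c pgl) set \<Rightarrow> bool" where
  "plectic v S F \<Gamma> \<longleftrightarrow> (\<exists>L. plectic_family v S F \<Gamma> L)"

text \<open>The set of distinguished limit points prod_p L_{Gamma,p} (the family L is unique).\<close>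
definition dist_limit_points :: "('c::field \<Rightarrow> real) \<Rightarrow> 'i set \<Rightarrow> ('i \<Rightarrow> 'c set) \<Rightarrow>
    ('i \<Rightarrow> 'c pgl) set \<Rightarrow> ('i \<Rightarrow> 'c pt) set" where
  "dist_limit_points v S F \<Gamma> = PiE S (THE L. plectic_family v S F \<Gamma> L)"

end

theory Submission
  imports Defs
begin

(* If pairwise distinct gamma_j in Gamma satisfy gamma_j(y) -> x, then the pairwise distinct
   conjugates g gamma_j g^-1 satisfy (g gamma_j g^-1)(g y) = g (gamma_j y) -> g x, because a
   Moebius transformation is Lipschitz for the chordal metric. Hence the limit set of
   g Gamma g^-1 is the image under g of the limit set of Gamma. As g acts componentwise, it maps
   the slice L_p x prod_{q <> p} P^1(C) onto g_p(L_p) x prod_{q <> p} P^1(C), so g Gamma g^-1 is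
   plectic with the family g_p(L_p). Such a family is unique, since P^1(F_p) is a proper subset
   of P^1(C): a square root of a uniformiser of F_p does not lie in F_p. *)

section \<open>Moebius transformations\<close>

abbreviation vec_smult :: "'c::field \<Rightarrow> 'c vec2 \<Rightarrow> 'c vec2" where
  "vec_smult k u \<equiv> (k * fst u, k * snd u)"

lemma proj_line_iff: "w \<in> proj_line u \<longleftrightarrow> (\<exists>k. k \<noteq> 0 \<and> w = vec_smult k u)"
  unfolding proj_line_def by auto

lemma proj_line_self: "u \<noteq> (0, 0) \<Longrightarrow> u \<in> proj_line u"
  unfolding proj_line_iff by (rule exI[of _ 1]) auto

lemma proj_line_eq:
  assumes "w \<in> proj_line u"
  shows "proj_line w = proj_line u"
proof -
  obtain k where k: "k \<noteq> 0" "w = vec_smult k u" using assms proj_line_iff by blast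
  show ?thesis
  proof (intro set_eqI iffI)
    fix z assume "z \<in> proj_line w"
    then obtain k' where "k' \<noteq> 0" "z = vec_smult (k' * k) u"
      unfolding proj_line_iff k(2) by (auto simp: mult.assoc)
    then show "z \<in> proj_line u"
      using k(1) unfolding proj_line_iff by (auto intro!: exI[of _ "k' * k"])
  next
    fix z assume "z \<in> proj_line u"
    then obtain k' where "k' \<noteq> 0" "z = vec_smult (k' / k) w"
      unfolding proj_line_iff k(2) using k(1) by auto
    then show "z \<in> proj_line w"
      using k(1) unfolding proj_line_iff by (auto intro!: exI[of _ "k' / k"])
  qed
qed

lemma proj_line_vec_smult: "k \<noteq> 0 \<Longrightarrow> proj_line (vec_smult k u) = proj_line u"
  by (rule proj_line_eq) (auto simp: proj_line_iff)

lemma P1_UNIV_iff: "z \<in> P1 UNIV \<longleftrightarrow> (\<exists>u. u \<noteq> (0, 0) \<and> z = proj_line u)"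
  unfolding P1_def by auto

lemma P1_subset_UNIV: "P1 K \<subseteq> P1 UNIV"
  unfolding P1_def by auto

lemma pt_rep_P1:
  assumes "z \<in> P1 UNIV"
  shows "pt_rep z \<in> z" "pt_rep z \<noteq> (0, 0)" "proj_line (pt_rep z) = z"
proof -
  obtain u where u: "u \<noteq> (0, 0)" "z = proj_line u" using assms P1_UNIV_iff by blast
  then show rep: "pt_rep z \<in> z" unfolding pt_rep_def using proj_line_self by (metis someI)
  then show "pt_rep z \<noteq> (0, 0)" using u by (auto simp: proj_line_iff prod_eq_iff)
  show "proj_line (pt_rep z) = z" using rep u proj_line_eq by metis
qed

lemma mapp_mmul: "mapp (mmul A B) u = mapp A (mapp B u)"
  by (cases A; cases B; cases u) (simp add: algebra_simps)

lemma mapp_madj_mapp: "mapp (madj A) (mapp A u) = vec_smult (mdet A) u"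
  by (cases A; cases u) (simp add: algebra_simps)

lemma mapp_vec_smult: "mapp A (vec_smult k u) = vec_smult k (mapp A u)"
  by (cases A; cases u) (simp add: algebra_simps)

lemma mapp_msmult: "mapp (msmult k A) u = vec_smult k (mapp A u)"
  by (cases A; cases u) (simp add: algebra_simps)

lemma mapp_nonzero: assumes "mdet A \<noteq> 0" "u \<noteq> (0, 0)" shows "mapp A u \<noteq> (0, 0)"
proof
  assume "mapp A u = (0, 0)"
  then have "vec_smult (mdet A) u = (0, 0)" by (metis mapp_madj_mapp mapp_vec_smult mult_zero_left)
  then show False using assms by (auto simp: prod_eq_iff)
qed

lemma mdet_mmul: "mdet (mmul A B) = mdet A * mdet B"
  by (cases A; cases B) (simp add: algebra_simps)

lemma mdet_madj: "mdet (madj A) = mdet A"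
  by (cases A) (simp add: algebra_simps)

lemma madj_madj: "madj (madj A) = A"
  by (cases A) simp

lemma mmul_msmult: "mmul (msmult k A) (msmult k' B) = msmult (k * k') (mmul A B)"
  by (cases A; cases B) (simp add: algebra_simps)

lemma madj_msmult: "madj (msmult k A) = msmult k (madj A)"
  by (cases A) simp

lemma msmult_msmult: "msmult k (msmult k' A) = msmult (k * k') A"
  by (cases A) (simp add: mult.assoc)

lemma msmult_one: "msmult 1 A = A"
  by (cases A) simp

lemma pgl_class_iff: "B \<in> pgl_class A \<longleftrightarrow> (\<exists>k. k \<noteq> 0 \<and> B = msmult k A)"
  unfolding pgl_class_def by auto

lemma pgl_class_self: "A \<in> pgl_class A"
  unfolding pgl_class_iff by (intro exI[of _ 1]) (simp add: msmult_one)

lemma pgl_class_msmult: assumes "k \<noteq> 0" shows "pgl_class (msmult k A) = pgl_class A"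
proof (intro set_eqI iffI)
  fix B assume "B \<in> pgl_class (msmult k A)"
  then obtain k' where "k' \<noteq> 0" "B = msmult (k' * k) A"
    unfolding pgl_class_iff msmult_msmult by blast
  then show "B \<in> pgl_class A" using assms unfolding pgl_class_iff by (intro exI[of _ "k' * k"]) simp
next
  fix B assume "B \<in> pgl_class A"
  then obtain k' where "k' \<noteq> 0" "B = msmult (k' / k) (msmult k A)"
    unfolding pgl_class_iff msmult_msmult using assms by auto
  then show "B \<in> pgl_class (msmult k A)"
    using assms unfolding pgl_class_iff by (intro exI[of _ "k' / k"]) simp
qed

lemma pgl_mult_class: "pgl_mult (pgl_class A) (pgl_class B) = pgl_class (mmul A B)"
proof (intro set_eqI iffI)
  fix C assume "C \<in> pgl_mult (pgl_class A) (pgl_class B)"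
  then obtain k k' where "k \<noteq> 0" "k' \<noteq> 0" "C = mmul (msmult k A) (msmult k' B)"
    unfolding pgl_mult_def pgl_class_iff by blast
  then show "C \<in> pgl_class (mmul A B)"
    unfolding pgl_class_iff mmul_msmult by (intro exI[of _ "k * k'"]) simp
next
  fix C assume "C \<in> pgl_class (mmul A B)"
  then obtain k where k: "k \<noteq> 0" "C = mmul (msmult k A) B"
    unfolding pgl_class_iff by (metis mmul_msmult msmult_one mult_1_right)
  then have "msmult k A \<in> pgl_class A" unfolding pgl_class_iff by blast
  then show "C \<in> pgl_mult (pgl_class A) (pgl_class B)"
    unfolding pgl_mult_def using k(2) pgl_class_self[of B] by blast
qed

lemma pgl_inv_class: "pgl_inv (pgl_class A) = pgl_class (madj A)"
  unfolding pgl_inv_def pgl_class_def madj_msmult[symmetric] by blast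

lemma pgl_inv_inv: "pgl_inv (pgl_inv X) = X"
  unfolding pgl_inv_def by (simp add: image_image madj_madj)

lemma PGL2E:
  assumes "X \<in> PGL2 K"
  obtains M where "X = pgl_class M" "mentries M \<subseteq> K" "mdet M \<noteq> 0"
  using assms unfolding PGL2_def by auto

lemma PGL2_UNIV_iff: "X \<in> PGL2 UNIV \<longleftrightarrow> (\<exists>M. X = pgl_class M \<and> mdet M \<noteq> 0)"
  unfolding PGL2_def by auto

lemma PGL2_subset_UNIV: "PGL2 K \<subseteq> PGL2 UNIV"
  unfolding PGL2_def by auto

lemma pgl_mult_PGL2: "X \<in> PGL2 UNIV \<Longrightarrow> Y \<in> PGL2 UNIV \<Longrightarrow> pgl_mult X Y \<in> PGL2 UNIV"
  unfolding PGL2_UNIV_iff by (metis pgl_mult_class mdet_mmul mult_eq_0_iff)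

lemma pgl_inv_PGL2: "X \<in> PGL2 UNIV \<Longrightarrow> pgl_inv X \<in> PGL2 UNIV"
  unfolding PGL2_UNIV_iff by (metis pgl_inv_class mdet_madj)

lemma pgl_conj_cancel:
  assumes "X \<in> PGL2 UNIV" "Y \<in> PGL2 UNIV"
  shows "pgl_mult (pgl_mult (pgl_inv X) (pgl_mult (pgl_mult X Y) (pgl_inv X))) (pgl_inv (pgl_inv X)) = Y"
proof -
  obtain M N where M: "X = pgl_class M" "mdet M \<noteq> 0" and N: "Y = pgl_class N"
    using assms unfolding PGL2_UNIV_iff by blast
  have "mmul (mmul (madj M) (mmul (mmul M N) (madj M))) M = msmult (mdet M * mdet M) N"
    by (cases M; cases N) (simp add: algebra_simps)
  then show ?thesis using M N
    by (simp add: pgl_inv_inv pgl_inv_class pgl_mult_class pgl_class_msmult madj_madj)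
qed

lemma mob_class:
  assumes "u \<noteq> (0, 0)"
  shows "mob (pgl_class M) (proj_line u) = proj_line (mapp M u)"
proof (intro set_eqI iffI)
  fix w assume "w \<in> mob (pgl_class M) (proj_line u)"
  then obtain k k' where "k \<noteq> 0" "k' \<noteq> 0" "w = mapp (msmult k M) (vec_smult k' u)"
    unfolding mob_def pgl_class_iff proj_line_iff by blast
  then show "w \<in> proj_line (mapp M u)"
    unfolding proj_line_iff mapp_msmult mapp_vec_smult
    by (intro exI[of _ "k * k'"]) (simp add: mult.assoc)
next
  fix w assume "w \<in> proj_line (mapp M u)"
  then obtain k where "k \<noteq> 0" "w = mapp M (vec_smult k u)"
    unfolding proj_line_iff mapp_vec_smult by blast
  then show "w \<in> mob (pgl_class M) (proj_line u)"
    unfolding mob_def proj_line_iff using pgl_class_self by blast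
qed

lemma mob_P1:
  assumes "X \<in> PGL2 UNIV" "z \<in> P1 UNIV"
  shows "mob X z \<in> P1 UNIV"
proof -
  obtain M u where "X = pgl_class M" "mdet M \<noteq> 0" "z = proj_line u" "u \<noteq> (0, 0)"
    using assms unfolding PGL2_UNIV_iff P1_UNIV_iff by blast
  then show ?thesis unfolding P1_UNIV_iff by (metis mob_class mapp_nonzero)
qed

lemma mob_pgl_mult:
  assumes "X \<in> PGL2 UNIV" "Y \<in> PGL2 UNIV" "z \<in> P1 UNIV"
  shows "mob (pgl_mult X Y) z = mob X (mob Y z)"
proof -
  obtain M N u where "X = pgl_class M" "mdet M \<noteq> 0" "Y = pgl_class N" "mdet N \<noteq> 0"
    "z = proj_line u" "u \<noteq> (0, 0)"
    using assms unfolding PGL2_UNIV_iff P1_UNIV_iff by blast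
  then show ?thesis by (simp add: pgl_mult_class mob_class mapp_nonzero mapp_mmul)
qed

lemma mob_pgl_inv:
  assumes "X \<in> PGL2 UNIV" "z \<in> P1 UNIV"
  shows "mob (pgl_inv X) (mob X z) = z"
proof -
  obtain M u where M: "X = pgl_class M" "mdet M \<noteq> 0" and u: "z = proj_line u" "u \<noteq> (0, 0)"
    using assms unfolding PGL2_UNIV_iff P1_UNIV_iff by blast
  have "mob (pgl_inv X) (mob X z) = proj_line (vec_smult (mdet M) u)"
    using M u by (simp add: pgl_inv_class mob_class mapp_nonzero mapp_madj_mapp)
  also have "\<dots> = z"
    using M(2) u(1) by (simp add: proj_line_vec_smult)
  finally show ?thesis .
qed

lemma mob_pgl_inv':
  assumes "X \<in> PGL2 UNIV" "z \<in> P1 UNIV"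
  shows "mob X (mob (pgl_inv X) z) = z"
  using mob_pgl_inv[OF pgl_inv_PGL2[OF assms(1)] assms(2)] by (simp add: pgl_inv_inv)

lemma mob_image_P1:
  assumes "X \<in> PGL2 UNIV"
  shows "mob X ` P1 UNIV = P1 UNIV"
proof (intro subset_antisym image_subsetI subsetI)
  show "mob X z \<in> P1 UNIV" if "z \<in> P1 UNIV" for z using assms that by (rule mob_P1)
  show "z \<in> mob X ` P1 UNIV" if "z \<in> P1 UNIV" for z
    using assms that by (intro image_eqI[where x = "mob (pgl_inv X) z"])
      (simp_all add: mob_pgl_inv' mob_P1 pgl_inv_PGL2)
qed

lemma mob_P1_subfield:
  assumes closed: "\<forall>x\<in>K. \<forall>y\<in>K. x + y \<in> K \<and> x * y \<in> K"
    and "X \<in> PGL2 K" "z \<in> P1 K"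
  shows "mob X z \<in> P1 K"
proof -
  obtain M where M: "X = pgl_class M" "mentries M \<subseteq> K" "mdet M \<noteq> 0"
    using assms(2) by (rule PGL2E)
  obtain x y where u: "z = proj_line (x, y)" "x \<in> K" "y \<in> K" "(x, y) \<noteq> (0, 0)"
    using assms(3) unfolding P1_def by auto
  obtain x' y' where xy': "mapp M (x, y) = (x', y')" by (cases "mapp M (x, y)")
  have "x' \<in> K" "y' \<in> K" using M(2) u(2,3) closed xy' by (cases M; auto)+
  moreover have "(x', y') \<noteq> (0, 0)" using mapp_nonzero[OF M(3) u(4)] xy' by simp
  moreover have "mob X z = proj_line (x', y')" using M(1) u(1,4) xy' by (simp add: mob_class)
  ultimately show ?thesis unfolding P1_def by blast
qed

section \<open>Continuity for the chordal metric\<close>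

definition vnorm :: "('c::field \<Rightarrow> real) \<Rightarrow> 'c vec2 \<Rightarrow> real" where
  "vnorm v u = max (v (fst u)) (v (snd u))"

fun mnorm :: "('c::field \<Rightarrow> real) \<Rightarrow> 'c m22 \<Rightarrow> real" where
  "mnorm v (a, b, c, d) = max (max (v a) (v b)) (max (v c) (v d))"

definition det2 :: "'c::field vec2 \<Rightarrow> 'c vec2 \<Rightarrow> 'c" where
  "det2 u w = fst u * snd w - snd u * fst w"

lemma chordal_eq: "chordal v u w = v (det2 u w) / (vnorm v u * vnorm v w)"
  unfolding chordal_def vnorm_def det2_def ..

lemma det2_mapp: "det2 (mapp A u) (mapp A w) = mdet A * det2 u w"
  unfolding det2_def by (cases A; cases u; cases w) (simp add: algebra_simps)

lemma det2_vec_smult: "det2 (vec_smult k u) (vec_smult k' w) = k * k' * det2 u w"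
  unfolding det2_def by (simp add: algebra_simps)

context
  fixes v :: "'c::field \<Rightarrow> real"
  assumes v: "nonarch_abs v"
begin

lemma nonarch_abs_mult: "v (x * y) = v x * v y"
  using v unfolding nonarch_abs_def by blast

lemma nonarch_abs_pos: "x \<noteq> 0 \<Longrightarrow> 0 < v x"
  using v unfolding nonarch_abs_def by blast

lemma nonarch_abs_nonneg: "0 \<le> v x"
  using v nonarch_abs_pos unfolding nonarch_abs_def by (cases "x = 0") (auto intro: less_imp_le)

lemma nonarch_abs_minus: "v (- x) = v x"
proof -
  have "v (- x) ^ 2 = v x ^ 2"
    using nonarch_abs_mult[of "- x" "- x"] nonarch_abs_mult[of x x] by (simp add: power2_eq_square)
  then show ?thesis by (simp add: power2_eq_iff_nonneg nonarch_abs_nonneg)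
qed

lemma nonarch_abs_lincomb: "v (a * x + b * y) \<le> max (v a) (v b) * max (v x) (v y)"
proof -
  have "v (a * x + b * y) \<le> max (v (a * x)) (v (b * y))"
    using v unfolding nonarch_abs_def by blast
  also have "\<dots> \<le> max (v a) (v b) * max (v x) (v y)"
    unfolding nonarch_abs_mult
    by (intro max.boundedI mult_mono) (auto simp: le_max_iff_disj nonarch_abs_nonneg)
  finally show ?thesis .
qed

lemma vnorm_nonneg: "0 \<le> vnorm v u"
  unfolding vnorm_def using nonarch_abs_nonneg by (simp add: le_max_iff_disj)

lemma vnorm_pos: "u \<noteq> (0, 0) \<Longrightarrow> 0 < vnorm v u"
  unfolding vnorm_def using nonarch_abs_pos by (cases u) (auto simp: less_max_iff_disj)

lemma vnorm_vec_smult: "vnorm v (vec_smult k u) = v k * vnorm v u"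
  unfolding vnorm_def using nonarch_abs_nonneg[of k]
  by (simp add: nonarch_abs_mult max_mult_distrib_left)

lemma vnorm_mapp_le: "vnorm v (mapp A u) \<le> mnorm v A * vnorm v u"
proof -
  obtain a b c d x y where A: "A = (a, b, c, d)" and u: "u = (x, y)" by (cases A, cases u)
  have "max (v a) (v b) * max (v x) (v y) \<le> mnorm v A * max (v x) (v y)"
    "max (v c) (v d) * max (v x) (v y) \<le> mnorm v A * max (v x) (v y)"
    using vnorm_nonneg[of u] unfolding A u vnorm_def by (auto intro!: mult_right_mono)
  then show ?thesis
    using nonarch_abs_lincomb[of a x b y] nonarch_abs_lincomb[of c x d y] unfolding A u vnorm_def by simp
qed

lemma mnorm_madj: "mnorm v (madj A) = mnorm v A"
  by (cases A) (simp add: nonarch_abs_minus max.commute max.left_commute)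

lemma vnorm_mapp_ge: "v (mdet A) * vnorm v u \<le> mnorm v A * vnorm v (mapp A u)"
  using vnorm_mapp_le[of "madj A" "mapp A u"]
  by (simp add: mapp_madj_mapp vnorm_vec_smult mnorm_madj)

lemma chordal_nonneg: "0 \<le> chordal v u w"
  unfolding chordal_eq using nonarch_abs_nonneg vnorm_nonneg by simp

lemma chordal_vec_smult:
  assumes "k \<noteq> 0" "k' \<noteq> 0"
  shows "chordal v (vec_smult k u) (vec_smult k' w) = chordal v u w"
  using assms nonarch_abs_pos[of k] nonarch_abs_pos[of k']
  by (simp add: chordal_eq det2_vec_smult vnorm_vec_smult nonarch_abs_mult)

lemma chordal_pt_rep:
  assumes "z \<in> P1 UNIV" "z' \<in> P1 UNIV" "a \<in> z" "b \<in> z'"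
  shows "chordal v a b = chordal v (pt_rep z) (pt_rep z')"
proof -
  have "a \<in> proj_line (pt_rep z)" "b \<in> proj_line (pt_rep z')"
    using assms pt_rep_P1(3)[OF assms(1)] pt_rep_P1(3)[OF assms(2)] by simp_all
  then obtain k k' where "k \<noteq> 0" "k' \<noteq> 0" "a = vec_smult k (pt_rep z)" "b = vec_smult k' (pt_rep z')"
    unfolding proj_line_iff by blast
  then show ?thesis by (simp add: chordal_vec_smult)
qed

lemma chordal_mapp_le:
  assumes A: "mdet A \<noteq> 0" and "u \<noteq> (0, 0)" "w \<noteq> (0, 0)"
  shows "chordal v (mapp A u) (mapp A w) \<le> mnorm v A ^ 2 / v (mdet A) * chordal v u w"
proof -
  define d m D where "d = v (mdet A)" and "m = mnorm v A" and "D = v (det2 u w)"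
  define P Q where "P = vnorm v (mapp A u) * vnorm v (mapp A w)" and "Q = vnorm v u * vnorm v w"
  have d: "0 < d" using nonarch_abs_pos A unfolding d_def by simp
  have D: "0 \<le> D" unfolding D_def by (rule nonarch_abs_nonneg)
  have PQ: "0 < P" "0 < Q"
    unfolding P_def Q_def using assms by (intro mult_pos_pos vnorm_pos mapp_nonzero; simp)+
  have lu: "d * vnorm v u \<le> m * vnorm v (mapp A u)"
    and lw: "d * vnorm v w \<le> m * vnorm v (mapp A w)"
    unfolding d_def m_def by (rule vnorm_mapp_ge)+
  have nu: "0 \<le> d * vnorm v u" and nw: "0 \<le> d * vnorm v w" using d vnorm_nonneg by simp_all
  have "(d * vnorm v u) * (d * vnorm v w) \<le> (m * vnorm v (mapp A u)) * (m * vnorm v (mapp A w))"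
    by (rule mult_mono[OF lu lw order.trans[OF nu lu] nw])
  then have "D * (d * d * Q) \<le> D * (m * m * P)"
    using D unfolding P_def Q_def by (intro mult_left_mono) (simp_all add: mult_ac)
  then have "d * D / P \<le> m ^ 2 / d * (D / Q)"
    using d PQ by (simp add: field_simps power2_eq_square)
  then show ?thesis unfolding chordal_eq d_def m_def D_def P_def Q_def det2_mapp nonarch_abs_mult .
qed

lemma p1_tendsto_mob:
  assumes X: "X \<in> PGL2 UNIV" and Z: "\<And>j. Z j \<in> P1 UNIV" and z: "z \<in> P1 UNIV"
    and lim: "p1_tendsto v Z z"
  shows "p1_tendsto v (\<lambda>j. mob X (Z j)) (mob X z)"
proof -
  obtain M where M: "X = pgl_class M" "mdet M \<noteq> 0" using X unfolding PGL2_UNIV_iff by blast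
  define C where "C = mnorm v M ^ 2 / v (mdet M)"
  have mem: "mapp M (pt_rep y) \<in> mob X y" if "y \<in> P1 UNIV" for y
    unfolding mob_def M(1) using pgl_class_self pt_rep_P1(1)[OF that] by blast
  have "chordal v (pt_rep (mob X (Z j))) (pt_rep (mob X z))
      = chordal v (mapp M (pt_rep (Z j))) (mapp M (pt_rep z))" for j
    using chordal_pt_rep[OF mob_P1[OF X Z] mob_P1[OF X z] mem[OF Z] mem[OF z]] by simp
  also have "\<dots> j \<le> C * chordal v (pt_rep (Z j)) (pt_rep z)" for j
    unfolding C_def by (intro chordal_mapp_le M(2) pt_rep_P1(2) Z z)
  finally have le: "chordal v (pt_rep (mob X (Z j))) (pt_rep (mob X z))
      \<le> C * chordal v (pt_rep (Z j)) (pt_rep z)" for j .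
  have lim': "(\<lambda>j. C * chordal v (pt_rep (Z j)) (pt_rep z)) \<longlonglongrightarrow> C * 0"
    using lim unfolding p1_tendsto_def by (intro tendsto_mult tendsto_const)
  show ?thesis unfolding p1_tendsto_def
    by (rule tendsto_sandwich[of "\<lambda>_. 0" _ _ "\<lambda>j. C * chordal v (pt_rep (Z j)) (pt_rep z)"])
      (use le lim' chordal_nonneg in auto)
qed

end

section \<open>Limit sets of conjugate groups\<close>

abbreviation PGL2_C :: "'i set \<Rightarrow> ('i \<Rightarrow> 'c::field pgl) set" where
  "PGL2_C S \<equiv> PGL2_S S (\<lambda>_. UNIV)"

definition conj_elem_S ::
    "'i set \<Rightarrow> ('i \<Rightarrow> 'c::field pgl) \<Rightarrow> ('i \<Rightarrow> 'c pgl) \<Rightarrow> ('i \<Rightarrow> 'c pgl)" where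
  "conj_elem_S S g h = mult_S S (mult_S S g h) (inv_S S g)"

lemma conj_S_eq_image: "conj_S S g \<Gamma> = conj_elem_S S g ` \<Gamma>"
  unfolding conj_S_def conj_elem_S_def ..

lemma PGL2_S_apply: "g \<in> PGL2_S S F \<Longrightarrow> q \<in> S \<Longrightarrow> g q \<in> PGL2 (F q)"
  unfolding PGL2_S_def by auto

lemma PGL2_S_subset_PGL2_C: "PGL2_S S F \<subseteq> PGL2_C S"
  unfolding PGL2_S_def using PGL2_subset_UNIV by (auto simp: PiE_iff)

lemma inv_S_PGL2_C: "g \<in> PGL2_C S \<Longrightarrow> inv_S S g \<in> PGL2_C S"
  unfolding PGL2_S_def inv_S_def using pgl_inv_PGL2 by (auto simp: PiE_iff)

lemma conj_elem_S_PGL2_C: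
  "g \<in> PGL2_C S \<Longrightarrow> h \<in> PGL2_C S \<Longrightarrow> conj_elem_S S g h \<in> PGL2_C S"
  unfolding PGL2_S_def conj_elem_S_def mult_S_def inv_S_def
  by (auto simp: PiE_iff intro!: pgl_mult_PGL2 pgl_inv_PGL2)

lemma conj_elem_S_cancel:
  assumes "g \<in> PGL2_C S" "h \<in> PGL2_C S"
  shows "conj_elem_S S (inv_S S g) (conj_elem_S S g h) = h"
proof (rule extensionalityI)
  show "h \<in> extensional S" using assms(2) unfolding PGL2_S_def by (rule PiE_iff[THEN iffD1, THEN conjunct2])
  show "conj_elem_S S (inv_S S g) (conj_elem_S S g h) q = h q" if "q \<in> S" for q
    using that pgl_conj_cancel[OF PGL2_S_apply[OF assms(1) that] PGL2_S_apply[OF assms(2) that]]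
    by (simp add: conj_elem_S_def mult_S_def inv_S_def)
qed (simp add: conj_elem_S_def mult_S_def)

lemma conj_S_cancel:
  assumes "\<Gamma> \<subseteq> PGL2_C S" "g \<in> PGL2_C S"
  shows "conj_S S (inv_S S g) (conj_S S g \<Gamma>) = \<Gamma>"
proof -
  have "(\<lambda>h. conj_elem_S S (inv_S S g) (conj_elem_S S g h)) ` \<Gamma> = (\<lambda>h. h) ` \<Gamma>"
    using assms conj_elem_S_cancel by (intro image_cong) blast+
  then show ?thesis by (simp add: conj_S_eq_image image_image)
qed

lemma inj_on_conj_elem_S:
  assumes "\<Gamma> \<subseteq> PGL2_C S" "g \<in> PGL2_C S"
  shows "inj_on (conj_elem_S S g) \<Gamma>"
  by (rule inj_on_inverseI[of \<Gamma> "conj_elem_S S (inv_S S g)"]) (use assms conj_elem_S_cancel in blast)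

lemma act_S_apply: "q \<in> S \<Longrightarrow> act_S S g x q = mob (g q) (x q)"
  unfolding act_S_def by simp

lemma act_S_image_PiE: "act_S S g ` PiE S A = PiE S (\<lambda>q. mob (g q) ` A q)"
proof (intro subset_antisym image_subsetI subsetI)
  show "act_S S g x \<in> PiE S (\<lambda>q. mob (g q) ` A q)" if "x \<in> PiE S A" for x
    using that unfolding act_S_def by (auto simp: PiE_iff)
next
  fix y assume y: "y \<in> PiE S (\<lambda>q. mob (g q) ` A q)"
  define x where "x = restrict (\<lambda>q. SOME a. a \<in> A q \<and> y q = mob (g q) a) S"
  have x: "x q \<in> A q \<and> y q = mob (g q) (x q)" if "q \<in> S" for q
  proof -
    have "\<exists>a. a \<in> A q \<and> y q = mob (g q) a" using y that unfolding PiE_iff by blast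
    then show ?thesis using someI_ex that unfolding x_def by simp
  qed
  have "y = act_S S g x"
    using y x unfolding act_S_def by (intro extensionalityI[of _ S]) (auto simp: PiE_iff)
  moreover have "x \<in> PiE S A" using x unfolding x_def by (auto simp: PiE_iff)
  ultimately show "y \<in> act_S S g ` PiE S A" by blast
qed

lemma act_S_image_PS:
  assumes "g \<in> PGL2_C S"
  shows "act_S S g ` PS S = PS S"
  unfolding PS_def act_S_image_PiE
  using PGL2_S_apply[OF assms] by (intro PiE_cong) (simp add: mob_image_P1)

lemma act_S_PS: "g \<in> PGL2_C S \<Longrightarrow> x \<in> PS S \<Longrightarrow> act_S S g x \<in> PS S"
  using act_S_image_PS by blast

lemma act_S_inv_S:
  assumes "g \<in> PGL2_C S" "x \<in> PS S"
  shows "act_S S g (act_S S (inv_S S g) x) = x"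
proof (rule extensionalityI[of _ S])
  show "x \<in> extensional S" using assms(2) unfolding PS_def by (simp add: PiE_iff)
  show "act_S S g (act_S S (inv_S S g) x) q = x q" if "q \<in> S" for q
    using that mob_pgl_inv'[OF PGL2_S_apply[OF assms(1) that]] assms(2)
    by (simp add: act_S_def inv_S_def PS_def PiE_iff)
qed (simp add: act_S_def)

lemma act_S_conj_elem_S:
  assumes "g \<in> PGL2_C S" "h \<in> PGL2_C S" "y \<in> PS S"
  shows "act_S S (conj_elem_S S g h) (act_S S g y) = act_S S g (act_S S h y)"
proof (rule extensionalityI[of _ S])
  fix q assume q: "q \<in> S"
  have g: "g q \<in> PGL2 UNIV" and h: "h q \<in> PGL2 UNIV" and y: "y q \<in> P1 UNIV"
    using PGL2_S_apply[OF assms(1) q] PGL2_S_apply[OF assms(2) q] assms(3) q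
    by (simp_all add: PS_def PiE_iff)
  have "mob (pgl_mult (pgl_mult (g q) (h q)) (pgl_inv (g q))) (mob (g q) (y q))
      = mob (pgl_mult (g q) (h q)) (mob (pgl_inv (g q)) (mob (g q) (y q)))"
    using g h y by (intro mob_pgl_mult pgl_mult_PGL2 pgl_inv_PGL2 mob_P1)
  also have "\<dots> = mob (g q) (mob (h q) (y q))"
    using g h y by (simp add: mob_pgl_inv mob_pgl_mult)
  finally show "act_S S (conj_elem_S S g h) (act_S S g y) q = act_S S g (act_S S h y) q"
    using q by (simp add: act_S_def conj_elem_S_def mult_S_def inv_S_def)
qed (simp_all add: act_S_def)

lemma limit_set_conj_subset:
  assumes v: "nonarch_abs v" and \<Gamma>: "\<Gamma> \<subseteq> PGL2_C S" and g: "g \<in> PGL2_C S"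
  shows "act_S S g ` limit_set v S \<Gamma> \<subseteq> limit_set v S (conj_S S g \<Gamma>)"
proof (rule image_subsetI)
  fix x assume "x \<in> limit_set v S \<Gamma>"
  then obtain y \<gamma> where x: "x \<in> PS S" and y: "y \<in> PS S" and \<gamma>: "\<And>j. \<gamma> j \<in> \<Gamma>" "inj \<gamma>"
    and lim: "\<And>q. q \<in> S \<Longrightarrow> p1_tendsto v (\<lambda>j. act_S S (\<gamma> j) y q) (x q)"
    unfolding limit_set_def by blast
  define \<gamma>' where "\<gamma>' = conj_elem_S S g \<circ> \<gamma>"
  have "\<gamma>' j \<in> conj_S S g \<Gamma>" for j unfolding \<gamma>'_def conj_S_eq_image using \<gamma>(1) by simp
  moreover have "inj \<gamma>'"
    unfolding \<gamma>'_def using \<gamma> inj_on_conj_elem_S[OF \<Gamma> g]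
    by (intro comp_inj_on) (auto intro: inj_on_subset)
  moreover have "p1_tendsto v (\<lambda>j. act_S S (\<gamma>' j) (act_S S g y) q) (act_S S g x q)"
    if q: "q \<in> S" for q
  proof -
    have \<gamma>C: "\<gamma> j \<in> PGL2_C S" for j using \<gamma>(1) \<Gamma> by blast
    have "act_S S (\<gamma>' j) (act_S S g y) q = mob (g q) (act_S S (\<gamma> j) y q)" for j
      unfolding \<gamma>'_def comp_def act_S_conj_elem_S[OF g \<gamma>C y] using q by (rule act_S_apply)
    moreover have "p1_tendsto v (\<lambda>j. mob (g q) (act_S S (\<gamma> j) y q)) (mob (g q) (x q))"
      using PGL2_S_apply[OF g q] act_S_PS[OF \<gamma>C y] x q lim
      by (intro p1_tendsto_mob[OF v]) (auto simp: PS_def PiE_iff)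
    ultimately show ?thesis using q by (simp add: act_S_apply)
  qed
  ultimately show "act_S S g x \<in> limit_set v S (conj_S S g \<Gamma>)"
    unfolding limit_set_def using act_S_PS[OF g] x y by blast
qed

lemma limit_set_conj:
  assumes v: "nonarch_abs v" and \<Gamma>: "\<Gamma> \<subseteq> PGL2_C S" and g: "g \<in> PGL2_C S"
  shows "limit_set v S (conj_S S g \<Gamma>) = act_S S g ` limit_set v S \<Gamma>"
proof
  show "act_S S g ` limit_set v S \<Gamma> \<subseteq> limit_set v S (conj_S S g \<Gamma>)"
    using assms by (rule limit_set_conj_subset)
  have "conj_S S g \<Gamma> \<subseteq> PGL2_C S"
    using \<Gamma> g conj_elem_S_PGL2_C unfolding conj_S_eq_image by blast
  then have "act_S S (inv_S S g) ` limit_set v S (conj_S S g \<Gamma>) \<subseteq> limit_set v S \<Gamma>"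
    using limit_set_conj_subset[OF v _ inv_S_PGL2_C[OF g]] conj_S_cancel[OF \<Gamma> g] by metis
  moreover have "x = act_S S g (act_S S (inv_S S g) x)" if "x \<in> limit_set v S (conj_S S g \<Gamma>)" for x
    using that act_S_inv_S[OF g] unfolding limit_set_def by simp
  ultimately show "limit_set v S (conj_S S g \<Gamma>) \<subseteq> act_S S g ` limit_set v S \<Gamma>"
    by blast
qed

lemma PS_slice_eq_PiE:
  assumes "q \<in> S" "B \<subseteq> P1 UNIV"
  shows "{x \<in> PS S. x q \<in> B} = PiE S (\<lambda>r. if r = q then B else P1 UNIV)"
proof (intro set_eqI iffI)
  fix x assume "x \<in> {x \<in> PS S. x q \<in> B}"
  then show "x \<in> PiE S (\<lambda>r. if r = q then B else P1 UNIV)" unfolding PS_def PiE_iff by auto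
next
  fix x assume "x \<in> PiE S (\<lambda>r. if r = q then B else P1 UNIV)"
  then have x: "\<forall>r\<in>S. x r \<in> (if r = q then B else P1 UNIV)" "x \<in> extensional S"
    unfolding PiE_iff by blast+
  have "x q \<in> B" using bspec[OF x(1) assms(1)] by simp
  moreover have "x r \<in> P1 UNIV" if "r \<in> S" for r
    using bspec[OF x(1) that] assms(2) by (cases "r = q") auto
  ultimately show "x \<in> {x \<in> PS S. x q \<in> B}" using x(2) unfolding PS_def PiE_iff by blast
qed

lemma act_S_image_slice:
  assumes g: "g \<in> PGL2_C S" and q: "q \<in> S" and B: "B \<subseteq> P1 UNIV"
  shows "act_S S g ` {x \<in> PS S. x q \<in> B} = {x \<in> PS S. x q \<in> mob (g q) ` B}"
proof -
  have gB: "mob (g q) ` B \<subseteq> P1 UNIV"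
    using B mob_P1 PGL2_S_apply[OF g q] by auto
  have "act_S S g ` {x \<in> PS S. x q \<in> B}
      = PiE S (\<lambda>r. if r = q then mob (g q) ` B else mob (g r) ` P1 UNIV)"
    unfolding PS_slice_eq_PiE[OF q B] act_S_image_PiE by (intro PiE_cong) simp
  also have "\<dots> = PiE S (\<lambda>r. if r = q then mob (g q) ` B else P1 UNIV)"
    using PGL2_S_apply[OF g] by (intro PiE_cong) (simp add: mob_image_P1)
  finally show ?thesis unfolding PS_slice_eq_PiE[OF q gB] .
qed

lemma plectic_family_conj:
  assumes v: "nonarch_abs v"
    and closed: "\<And>q. q \<in> S \<Longrightarrow> \<forall>x\<in>F q. \<forall>y\<in>F q. x + y \<in> F q \<and> x * y \<in> F q"
    and \<Gamma>: "\<Gamma> \<subseteq> PGL2_C S" and g: "g \<in> PGL2_S S F"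
    and L: "plectic_family v S F \<Gamma> L"
  shows "plectic_family v S F (conj_S S g \<Gamma>) (\<lambda>q. mob (g q) ` L q)"
  unfolding plectic_family_def
proof (intro conjI allI ballI impI)
  have gC: "g \<in> PGL2_C S" using g PGL2_S_subset_PGL2_C by blast
  have LP: "L q \<subseteq> P1 (F q)" if "q \<in> S" for q using L that unfolding plectic_family_def by blast
  show "mob (g q) ` L q \<subseteq> P1 (F q)" if "q \<in> S" for q
    using mob_P1_subfield[OF closed PGL2_S_apply[OF g]] LP that by blast
  show "mob (g q) ` L q = {}" if "q \<notin> S" for q
    using L that unfolding plectic_family_def by simp
  have "limit_set v S (conj_S S g \<Gamma>) = act_S S g ` (\<Union>q\<in>S. {x \<in> PS S. x q \<in> L q})"
    using L unfolding limit_set_conj[OF v \<Gamma> gC] plectic_family_def by simp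
  also have "\<dots> = (\<Union>q\<in>S. act_S S g ` {x \<in> PS S. x q \<in> L q})"
    by (rule image_UN)
  also have "\<dots> = (\<Union>q\<in>S. {x \<in> PS S. x q \<in> mob (g q) ` L q})"
    by (intro SUP_cong refl act_S_image_slice[OF gC] order.trans[OF LP P1_subset_UNIV])
  finally show "limit_set v S (conj_S S g \<Gamma>) = (\<Union>q\<in>S. {x \<in> PS S. x q \<in> mob (g q) ` L q})" .
qed

section \<open>Uniqueness of the distinguished limit points\<close>

lemma local_subfield_proper:
  assumes C: "ambient_C p v" and K: "local_subfield v K"
  shows "\<exists>c. c \<notin> K"
proof -
  have v: "nonarch_abs v" using C unfolding ambient_C_def by blast
  obtain \<pi> where \<pi>: "\<pi> \<in> K" "0 < v \<pi>" "v \<pi> < 1"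
    and disc: "\<And>x. x \<in> K \<Longrightarrow> x \<noteq> 0 \<Longrightarrow> \<exists>n::int. v x = v \<pi> powi n"
    using K unfolding local_subfield_def by blast
  \<comment> \<open>a square root of \<pi>: its value would be an integral power of v \<pi> with square v \<pi>\<close>
  have "degree [:- \<pi>, 0, 1:] > 0" by simp
  then obtain c where c: "poly [:- \<pi>, 0, 1:] c = 0"
    using C unfolding ambient_C_def alg_closed_field_def by blast
  then have cc: "c * c = \<pi>" by (simp add: algebra_simps)
  show ?thesis
  proof (intro exI notI)
    assume "c \<in> K"
    moreover have "c \<noteq> 0" using cc \<pi>(2) v unfolding nonarch_abs_def by auto
    ultimately obtain n where n: "v c = v \<pi> powi n" using disc by blast
    have "v \<pi> = v \<pi> powi n * v \<pi> powi n"
      using cc nonarch_abs_mult[OF v, of c c] by (simp add: n)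
    also have "\<dots> = v \<pi> powi (n + n)"
      using \<pi>(2) by (intro power_int_add[symmetric]) simp
    finally have "v \<pi> powr 1 = v \<pi> powr real_of_int (n + n)"
      using \<pi>(2) powr_real_of_int'[of "v \<pi>" "n + n"] by simp
    then have "real_of_int (n + n) = 1" using powr_inj[of "v \<pi>" 1] \<pi>(2,3) by simp
    then show False by presburger
  qed
qed

lemma P1_local_subfield_proper:
  assumes "ambient_C p v" "local_subfield v K"
  shows "\<exists>w\<in>P1 UNIV. w \<notin> P1 K"
proof -
  obtain c where c: "c \<notin> K" using local_subfield_proper[OF assms] by blast
  have "proj_line (c, 1) \<notin> P1 K"
  proof
    assume "proj_line (c, 1) \<in> P1 K"
    then obtain x y where "(c, 1) \<in> proj_line (x, y)" "x \<in> K" "y \<in> K"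
      unfolding P1_def using proj_line_self[of "(c, 1)"] by auto
    then obtain k where k: "c = k * x" "k * y = 1" "x \<in> K" "y \<in> K" unfolding proj_line_iff by auto
    then have "inverse y = k" "y \<noteq> 0" by (auto intro: inverse_unique simp: mult.commute)
    then have "c \<in> K" using k assms(2) unfolding local_subfield_def by auto
    then show False using c by blast
  qed
  moreover have "proj_line (c, 1) \<in> P1 UNIV" unfolding P1_UNIV_iff by (intro exI[of _ "(c, 1)"]) simp
  ultimately show ?thesis by blast
qed

lemma plectic_family_unique:
  assumes proper: "\<And>q. q \<in> S \<Longrightarrow> \<exists>w\<in>P1 UNIV. w \<notin> P1 (F q)"
    and "plectic_family v S F \<Gamma> L" "plectic_family v S F \<Gamma> L'"
  shows "L = L'"
proof -
  obtain W where W: "\<forall>q\<in>S. W q \<in> P1 UNIV \<and> W q \<notin> P1 (F q)"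
    using bchoice[of S "\<lambda>q w. w \<in> P1 UNIV \<and> w \<notin> P1 (F q)"] proper by blast
  have sub: "L q \<subseteq> L' q"
    if L: "plectic_family v S F \<Gamma> L" and L': "plectic_family v S F \<Gamma> L'" and q: "q \<in> S"
    for L L' q
  proof
    fix z assume z: "z \<in> L q"
    \<comment> \<open>x lies in the limit set, but its coordinates off q avoid every L' r, so x q \<in> L' q\<close>
    define x where "x = restrict (\<lambda>r. if r = q then z else W r) S"
    have "z \<in> P1 UNIV" using L q z P1_subset_UNIV unfolding plectic_family_def by blast
    then have "x \<in> PS S" unfolding x_def PS_def using W by (auto simp: PiE_iff)
    then have "x \<in> limit_set v S \<Gamma>" using L q z unfolding plectic_family_def x_def by auto
    then obtain r where r: "r \<in> S" "x r \<in> L' r" using L' unfolding plectic_family_def by auto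
    then have "x r \<in> P1 (F r)" using L' unfolding plectic_family_def by blast
    then have "r = q" using W r(1) unfolding x_def by (auto split: if_split_asm)
    then show "z \<in> L' q" using r unfolding x_def by simp
  qed
  show ?thesis
  proof
    fix q show "L q = L' q"
      using assms(2,3) sub[OF assms(2,3)] sub[OF assms(3,2)]
      by (cases "q \<in> S") (auto simp: plectic_family_def)
  qed
qed

lemma dist_limit_points_eq:
  assumes "\<And>q. q \<in> S \<Longrightarrow> \<exists>w\<in>P1 UNIV. w \<notin> P1 (F q)" and "plectic_family v S F \<Gamma> L"
  shows "dist_limit_points v S F \<Gamma> = PiE S L"
proof -
  have "(THE L. plectic_family v S F \<Gamma> L) = L"
    by (intro the_equality assms(2)) (rule plectic_family_unique[OF assms(1) _ assms(2)])
  then show ?thesis unfolding dist_limit_points_def by simp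
qed

theorem lemma2p11:
  fixes p :: nat and v :: "'c::field \<Rightarrow> real"
    and S :: "'i set" and F :: "'i \<Rightarrow> 'c set"
    and \<Gamma> :: "('i \<Rightarrow> 'c pgl) set" and g :: "'i \<Rightarrow> 'c pgl"
  assumes "ambient_C p v"
    and "emb_local_etale v S F"
    and "subgroup_S S F \<Gamma>"
    and "plectic v S F \<Gamma>"
    and "g \<in> PGL2_S S F"
  shows "plectic v S F (conj_S S g \<Gamma>) \<and>
         dist_limit_points v S F (conj_S S g \<Gamma>) = act_S S g ` dist_limit_points v S F \<Gamma>"
proof -
  have v: "nonarch_abs v" using assms(1) unfolding ambient_C_def by blast
  have K: "local_subfield v (F q)" if "q \<in> S" for q
    using assms(2) that unfolding emb_local_etale_def by blast
  then have closed: "\<forall>x\<in>F q. \<forall>y\<in>F q. x + y \<in> F q \<and> x * y \<in> F q" if "q \<in> S" for q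
    using that unfolding local_subfield_def by blast
  have proper: "\<exists>w\<in>P1 UNIV. w \<notin> P1 (F q)" if "q \<in> S" for q
    using P1_local_subfield_proper[OF assms(1) K[OF that]] .
  have \<Gamma>: "\<Gamma> \<subseteq> PGL2_C S"
    using assms(3) PGL2_S_subset_PGL2_C unfolding subgroup_S_def by blast
  obtain L where L: "plectic_family v S F \<Gamma> L" using assms(4) unfolding plectic_def by blast
  have L': "plectic_family v S F (conj_S S g \<Gamma>) (\<lambda>q. mob (g q) ` L q)"
    using plectic_family_conj[OF v closed \<Gamma> assms(5) L] .
  have "dist_limit_points v S F (conj_S S g \<Gamma>) = PiE S (\<lambda>q. mob (g q) ` L q)"
    using dist_limit_points_eq[OF proper L'] .
  also have "\<dots> = act_S S g ` dist_limit_points v S F \<Gamma>"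
    by (simp add: act_S_image_PiE dist_limit_points_eq[OF proper L])
  finally show ?thesis using L' unfolding plectic_def by blast
qed

end
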